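(* Let $n\ge 1$ and let $\|\cdot\|$ be a norm on $\mathbb{R}^n$ that is $C^\infty$ on $\mathbb{R}^n\setminus\{0\}$. Let $G^n$ be the group (under composition) of all $C^\infty$ diffeomorphisms $\mathbf{Y}:\mathbb{R}^n\setminus\{0\}\to\mathbb{R}^n\setminus\{0\}$ with $\mathbf{Y}(\lambda\mathbf{x})=\lambda\mathbf{Y}(\mathbf{x})$ for all $\mathbf{x}\ne0$, $\lambda\in\mathbb{R}\setminus\{0\}$, with product $\mathbf{Y}_{g_1g_2}=\mathbf{Y}_{g_1}\circ\mathbf{Y}_{g_2}$. Let $N^n\subset G^n$ consist of the elements with $\mathbf{Y}_g(\mathbf{x})=\mathbf{x}\,r_g(\mathbf{x})$ for a $C^\infty$ function $r_g:\mathbb{R}^n\setminus\{0\}\to(0,\infty)$ satisfying $r_g(\lambda\mathbf{x})=r_g(\mathbf{x})$ for all $\lambda\in\mathbb{R}\setminus\{0\}$. Let $H^n\subset G^n$ be the subgroup of elements $h$ with $\|\mathbf{Y}_h(\mathbf{x})\|=\|\mathbf{x}\|$ and $\mathbf{Y}_h(-\mathbf{x})=-\mathbf{Y}_h(\mathbf{x})$ for all $\mathbf{x}\ne 0$. Then every $g\in G^n$ has a unique representation $g=h\,g_N$ with $h\in H^n$ and $g_N\in N^n$, i.e. $\mathbf{Y}_g=\mathbf{Y}_h\circ\mathbf{Y}_{g_N}$.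
   Context: $G^n$ is the group of Thermodynamic Coordinate Transformations (homogeneous degree-one diffeomorphisms of $\mathbb{R}^n\setminus\{0\}$); elements are identified with their maps and the group law is composition. *)

theory Defs
  imports "HOL-Analysis.Analysis"
begin

text \<open>C-infinity real-valued functions on an (open) set S of R^n: continuous, and every
  first-order partial derivative exists at every point of S and is again C-infinity
  (coinductively, i.e. partial derivatives of all orders exist and are continuous).\<close>
coinductive smooth_on :: "(real ^ 'n) set \<Rightarrow> (real ^ 'n \<Rightarrow> real) \<Rightarrow> bool" where
  "continuous_on S g \<Longrightarrow>
   (\<forall>i. \<exists>g'. (\<forall>x\<in>S. ((\<lambda>t. g (x + t *\<^sub>R axis i 1)) has_real_derivative g' x) (at 0))
             \<and> smooth_on S g') \<Longrightarrow> smooth_on S g"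

definition smooth_map_on :: "(real ^ 'n) set \<Rightarrow> (real ^ 'n \<Rightarrow> real ^ 'm) \<Rightarrow> bool" where
  "smooth_map_on S Y \<longleftrightarrow> (\<forall>j. smooth_on S (\<lambda>x. Y x $ j))"

abbreviation punct :: "(real ^ 'n) set" where
  "punct \<equiv> UNIV - {0}"

definition is_norm :: "(real ^ 'n \<Rightarrow> real) \<Rightarrow> bool" where
  "is_norm nrm \<longleftrightarrow> (\<forall>x. nrm x = 0 \<longleftrightarrow> x = 0) \<and> (\<forall>x y. nrm (x + y) \<le> nrm x + nrm y)
     \<and> (\<forall>c x. nrm (c *\<^sub>R x) = \<bar>c\<bar> * nrm x)"

text \<open>Convention: maps are
  extended by Y 0 = 0 so that elements are identified with total functions.\<close>
definition TCT :: "(real ^ 'n \<Rightarrow> real ^ 'n) set" where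
  "TCT = {Y. Y 0 = 0 \<and> bij_betw Y punct punct \<and> smooth_map_on punct Y
             \<and> smooth_map_on punct (inv_into punct Y)
             \<and> (\<forall>x lam. x \<noteq> 0 \<longrightarrow> lam \<noteq> 0 \<longrightarrow> Y (lam *\<^sub>R x) = lam *\<^sub>R Y x)}"

definition TCT_N :: "(real ^ 'n \<Rightarrow> real ^ 'n) set" where
  "TCT_N = {Y \<in> TCT. \<exists>r. smooth_on punct r \<and> (\<forall>x. x \<noteq> 0 \<longrightarrow> r x > 0)
             \<and> (\<forall>x lam. x \<noteq> 0 \<longrightarrow> lam \<noteq> 0 \<longrightarrow> r (lam *\<^sub>R x) = r x)
             \<and> (\<forall>x. x \<noteq> 0 \<longrightarrow> Y x = r x *\<^sub>R x)}"

definition TCT_H :: "(real ^ 'n \<Rightarrow> real) \<Rightarrow> (real ^ 'n \<Rightarrow> real ^ 'n) set" where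
  "TCT_H nrm = {Y \<in> TCT. \<forall>x. x \<noteq> 0 \<longrightarrow> nrm (Y x) = nrm x \<and> Y (- x) = - Y x}"

end

theory Submission
  imports Defs
begin

text \<open>A decomposition \<open>Y = h \<circ> g\<^sub>N\<close> forces \<open>g\<^sub>N\<close> to be the radial rescaling by
  \<open>\<rho>(x) = \<parallel>Y x\<parallel> / \<parallel>x\<parallel>\<close>, because \<open>h\<close> preserves the norm and \<open>g\<^sub>N\<close> only rescales; \<open>h\<close> is then
  determined since \<open>g\<^sub>N\<close> is onto. Conversely \<open>\<rho>\<close> is smooth, positive and 0-homogeneous, so this
  rescaling lies in \<open>N\<^sup>n\<close>, and \<open>Y \<circ> g\<^sub>N\<^sup>-\<^sup>1\<close> is a norm-preserving odd element of \<open>G\<^sup>n\<close>. The analytic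
  input is that smooth functions are closed under composition, for which continuous partial
  derivatives must first be shown to give a derivative, so that the chain rule applies.\<close>

section \<open>Calculus of smooth functions\<close>

lemma DERIV_linearization_bound:
  fixes g g' :: "real \<Rightarrow> real"
  assumes der: "\<And>t. t \<in> closed_segment 0 s \<Longrightarrow> (g has_real_derivative g' t) (at t)"
    and bnd: "\<And>t. t \<in> closed_segment 0 s \<Longrightarrow> \<bar>g' t - c\<bar> \<le> e"
  shows "\<bar>g s - g 0 - s * c\<bar> \<le> e * \<bar>s\<bar>"
proof -
  have "((\<lambda>u. g u - u * c) has_real_derivative g' t - c) (at t within closed_segment 0 s)"
    if "t \<in> closed_segment 0 s" for t
    using has_field_derivative_at_within[OF DERIV_diff[OF der[OF that] DERIV_cmult_right[OF DERIV_ident]]]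
    by simp
  then have "norm ((\<lambda>u. g u - u * c) s - (\<lambda>u. g u - u * c) 0) \<le> e * norm (s - 0)"
    by (rule field_differentiable_bound[OF convex_closed_segment]) (use bnd in auto)
  then show ?thesis by simp
qed

lemma norm_clear_component_le: "norm (x - (x$k) *\<^sub>R axis k 1 + s *\<^sub>R axis k 1) \<le> norm x"
  if "\<bar>s\<bar> \<le> \<bar>x$k\<bar>" for x :: "real^'m"
  by (rule norm_le_componentwise_cart) (use that in \<open>auto simp: axis_def\<close>)

lemma axis_increment_bound:
  fixes f :: "real^'m \<Rightarrow> real"
  assumes pd: "\<And>z. z \<in> ball y d \<Longrightarrow> ((\<lambda>t. f (z + t *\<^sub>R axis k 1)) has_real_derivative D z) (at 0)"
    and bnd: "\<And>w. w \<in> ball y d \<Longrightarrow> \<bar>D w - D y\<bar> \<le> e"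
    and "norm h < d"
  shows "\<bar>f (y + h) - f (y + h - (h$k) *\<^sub>R axis k 1) - h$k * D y\<bar> \<le> e * \<bar>h$k\<bar>"
proof -
  define z where "z = y + h - (h$k) *\<^sub>R axis k 1"
  have near: "z + s *\<^sub>R axis k 1 \<in> ball y d" if "s \<in> closed_segment 0 (h$k)" for s
  proof -
    have "dist (z + s *\<^sub>R axis k 1) y = norm (h - (h$k) *\<^sub>R axis k 1 + s *\<^sub>R axis k 1)"
      by (simp add: z_def dist_norm algebra_simps)
    also have "\<dots> < d"
      using norm_clear_component_le[of s h k] that \<open>norm h < d\<close>
      by (auto simp: closed_segment_eq_real_ivl split: if_splits)
    finally show ?thesis
      by (simp add: dist_commute)
  qed
  have "\<bar>f (z + h$k *\<^sub>R axis k 1) - f (z + 0 *\<^sub>R axis k 1) - h$k * D y\<bar> \<le> e * \<bar>h$k\<bar>"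
  proof (rule DERIV_linearization_bound[where g = "\<lambda>s. f (z + s *\<^sub>R axis k 1)"])
    fix s
    assume s: "s \<in> closed_segment 0 (h$k)"
    from pd[OF near[OF s]]
    have "((\<lambda>t. f (z + (t + s) *\<^sub>R axis k 1)) has_real_derivative D (z + s *\<^sub>R axis k 1)) (at 0)"
      by (simp add: scaleR_add_left algebra_simps)
    then show "((\<lambda>s. f (z + s *\<^sub>R axis k 1)) has_real_derivative D (z + s *\<^sub>R axis k 1)) (at s)"
      using DERIV_shift[of "\<lambda>t. f (z + t *\<^sub>R axis k 1)" _ 0 s] by simp
    show "\<bar>D (z + s *\<^sub>R axis k 1) - D y\<bar> \<le> e"
      by (rule bnd[OF near[OF s]])
  qed
  then show ?thesis
    by (simp add: z_def)
qed

text \<open>Increments are allowed to move along the coordinates in \<open>K\<close> only; each coordinate added to \<open>K\<close>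
  is handled by the mean value theorem along its axis.\<close>

lemma has_derivative_partials_on_coordinates:
  fixes f :: "real^'m \<Rightarrow> real"
  assumes T: "open T" "y \<in> T"
    and pd: "\<And>j z. z \<in> T \<Longrightarrow> ((\<lambda>t. f (z + t *\<^sub>R axis j 1)) has_real_derivative D j z) (at 0)"
    and cont: "\<And>j. continuous_on T (D j)"
    and "finite K" and "e > 0"
  shows "\<exists>d>0. \<forall>h. norm h < d \<longrightarrow> (\<forall>j. j \<notin> K \<longrightarrow> h$j = 0) \<longrightarrow>
           \<bar>f (y + h) - f y - (\<Sum>j\<in>K. h$j * D j y)\<bar> \<le> e * norm h"
  using \<open>finite K\<close> \<open>e > 0\<close>
proof (induction K arbitrary: e rule: finite_induct)
  case empty
  have "h = 0" if "\<forall>j. j \<notin> {} \<longrightarrow> h$j = 0" for h :: "real^'m"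
    using that by (simp add: vec_eq_iff)
  then show ?case by (intro exI[of _ 1]) fastforce
next
  case (insert k K e)
  obtain d2 where "d2 > 0" and d2: "\<And>h. norm h < d2 \<Longrightarrow> (\<forall>j. j \<notin> K \<longrightarrow> h$j = 0) \<Longrightarrow>
      \<bar>f (y + h) - f y - (\<Sum>j\<in>K. h$j * D j y)\<bar> \<le> e/2 * norm h"
    using insert.IH[of "e/2"] insert.prems by auto
  obtain d0 where "d0 > 0" and d0: "ball y d0 \<subseteq> T"
    using T open_contains_ball by blast
  have "continuous (at y) (D k)"
    using cont T continuous_on_eq_continuous_at by blast
  then obtain d1 where "d1 > 0" and d1: "\<And>w. dist w y < d1 \<Longrightarrow> \<bar>D k w - D k y\<bar> < e/2"
    unfolding continuous_at_eps_delta dist_real_def using insert.prems by (meson half_gt_zero)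
  define d where "d = min d0 (min d1 d2)"
  have "d > 0" using \<open>d0 > 0\<close> \<open>d1 > 0\<close> \<open>d2 > 0\<close> by (simp add: d_def)
  moreover have "\<bar>f (y + h) - f y - (\<Sum>j\<in>insert k K. h$j * D j y)\<bar> \<le> e * norm h"
    if h: "norm h < d" "\<forall>j. j \<notin> insert k K \<longrightarrow> h$j = 0" for h
  proof -
    define h' where "h' = h - (h$k) *\<^sub>R axis k 1"
    have line: "\<bar>f (y + h) - f (y + h') - h$k * D k y\<bar> \<le> e/2 * \<bar>h$k\<bar>"
      unfolding h'_def add_diff_eq
      by (rule axis_increment_bound[of y d])
         (use pd[OF subsetD[OF d0]] d1 h(1) in \<open>auto simp: d_def dist_commute less_imp_le\<close>)
    have "norm h' \<le> norm h"
      using norm_clear_component_le[of 0 h k] by (simp add: h'_def)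
    moreover have "(\<Sum>j\<in>K. h'$j * D j y) = (\<Sum>j\<in>K. h$j * D j y)"
      using insert.hyps by (intro sum.cong) (auto simp: h'_def axis_def)
    ultimately have "\<bar>f (y + h') - f y - (\<Sum>j\<in>K. h$j * D j y)\<bar> \<le> e/2 * norm h'"
      using d2[of h'] h by (auto simp: d_def h'_def axis_def)
    then have rest: "\<bar>f (y + h') - f y - (\<Sum>j\<in>K. h$j * D j y)\<bar> \<le> e/2 * norm h"
      using mult_left_mono[OF \<open>norm h' \<le> norm h\<close>, of "e/2"] insert.prems by linarith
    have "e/2 * \<bar>h$k\<bar> \<le> e/2 * norm h"
      using insert.prems component_le_norm_cart[of h k] by (simp add: mult_left_mono)
    moreover have "(\<Sum>j\<in>insert k K. h$j * D j y) = h$k * D k y + (\<Sum>j\<in>K. h$j * D j y)"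
      using insert.hyps by simp
    ultimately show ?thesis
      using line rest by linarith
  qed
  ultimately show ?case by blast
qed

lemma has_derivative_continuous_partials:
  fixes f :: "real^'m \<Rightarrow> real"
  assumes "open T" "y \<in> T"
    and "\<And>j z. z \<in> T \<Longrightarrow> ((\<lambda>t. f (z + t *\<^sub>R axis j 1)) has_real_derivative D j z) (at 0)"
    and "\<And>j. continuous_on T (D j)"
  shows "(f has_derivative (\<lambda>v. \<Sum>j\<in>UNIV. v$j * D j y)) (at y)"
  unfolding has_derivative_at_alt
proof (intro conjI allI impI)
  show "bounded_linear (\<lambda>v. \<Sum>j\<in>UNIV. v$j * D j y)"
    by (intro bounded_linear_sum bounded_linear_compose[OF bounded_linear_mult_left bounded_linear_vec_nth])
  fix e :: real assume "e > 0"
  then obtain d where "d > 0" and d: "\<And>h. norm h < d \<Longrightarrow> \<bar>f (y + h) - f y - (\<Sum>j\<in>UNIV. h$j * D j y)\<bar> \<le> e * norm h"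
    using has_derivative_partials_on_coordinates[OF assms, of UNIV] by auto
  show "\<exists>d>0. \<forall>y'. norm (y' - y) < d \<longrightarrow> norm (f y' - f y - (\<Sum>j\<in>UNIV. (y' - y)$j * D j y)) \<le> e * norm (y' - y)"
    using d[of "_ - y"] \<open>d > 0\<close> by (intro exI[of _ d]) auto
qed

lemma DERIV_partial_chain:
  fixes f :: "real^'m \<Rightarrow> real" and Y :: "real^'n \<Rightarrow> real^'m"
  assumes f: "(f has_derivative (\<lambda>v. \<Sum>j\<in>UNIV. v$j * Df j)) (at (Y x))"
    and Y: "\<And>j. ((\<lambda>t. Y (x + t *\<^sub>R axis i 1) $ j) has_real_derivative DY j) (at 0)"
  shows "((\<lambda>t. f (Y (x + t *\<^sub>R axis i 1))) has_real_derivative (\<Sum>j\<in>UNIV. DY j * Df j)) (at 0)"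
proof -
  let ?c = "\<lambda>t. Y (x + t *\<^sub>R axis i 1)"
  have "((\<lambda>t. ?c t \<bullet> b) has_derivative (\<lambda>t. (t *\<^sub>R (\<chi> j. DY j)) \<bullet> b)) (at 0)"
    if "b \<in> Basis" for b
  proof -
    from that obtain j where b: "b = axis j 1"
      by (auto simp: Basis_vec_def)
    show ?thesis
      using Y[of j] by (simp add: b inner_axis has_field_derivative_def mult_commute_abs)
  qed
  then have "(?c has_derivative (\<lambda>t. t *\<^sub>R (\<chi> j. DY j))) (at 0)"
    using has_derivative_componentwise_within by blast
  moreover from f have "(f has_derivative (\<lambda>v. \<Sum>j\<in>UNIV. v$j * Df j)) (at (?c 0))"
    by simp
  ultimately have "((\<lambda>t. f (?c t)) has_derivative (\<lambda>t. \<Sum>j\<in>UNIV. (t *\<^sub>R (\<chi> j. DY j))$j * Df j)) (at 0)"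
    by (rule diff_chain_at[unfolded o_def])
  moreover have "(\<lambda>t. \<Sum>j\<in>UNIV. (t *\<^sub>R (\<chi> j. DY j))$j * Df j) = (*) (\<Sum>j\<in>UNIV. DY j * Df j)"
    by (auto simp: sum_distrib_left algebra_simps)
  ultimately show ?thesis by (simp add: has_field_derivative_def)
qed

definition partials_in :: "(real^'n) set \<Rightarrow> ((real^'n \<Rightarrow> real) \<Rightarrow> bool) \<Rightarrow> (real^'n \<Rightarrow> real) \<Rightarrow> bool" where
  "partials_in S P g \<longleftrightarrow>
     (\<forall>i. \<exists>g'. (\<forall>x\<in>S. ((\<lambda>t. g (x + t *\<^sub>R axis i 1)) has_real_derivative g' x) (at 0)) \<and> P g')"

lemma smooth_onI: "continuous_on S g \<Longrightarrow> partials_in S (smooth_on S) g \<Longrightarrow> smooth_on S g"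
  unfolding partials_in_def by (rule smooth_on.intros)

lemma smooth_onD:
  assumes "smooth_on S g"
  shows smooth_on_continuous_on: "continuous_on S g"
    and smooth_on_partials_in: "partials_in S (smooth_on S) g"
  using assms by (cases rule: smooth_on.cases; auto simp: partials_in_def)+

lemma partials_inD:
  assumes "partials_in S P g"
  obtains g' where "\<And>x. x \<in> S \<Longrightarrow> ((\<lambda>t. g (x + t *\<^sub>R axis i 1)) has_real_derivative g' x) (at 0)" "P g'"
  using assms unfolding partials_in_def by blast

lemma partials_in_mono: "partials_in S P g \<Longrightarrow> (\<And>g. P g \<Longrightarrow> Q g) \<Longrightarrow> partials_in S Q g"
  unfolding partials_in_def by blast

lemma partials_in_add:
  assumes "partials_in S P g" and "partials_in S P h"
    and "\<And>g' h'. P g' \<Longrightarrow> P h' \<Longrightarrow> P (\<lambda>x. g' x + h' x)"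
  shows "partials_in S P (\<lambda>x. g x + h x)"
  unfolding partials_in_def
proof
  fix i
  obtain g' h' where g': "\<And>x. x \<in> S \<Longrightarrow> ((\<lambda>t. g (x + t *\<^sub>R axis i 1)) has_real_derivative g' x) (at 0)" "P g'"
    and h': "\<And>x. x \<in> S \<Longrightarrow> ((\<lambda>t. h (x + t *\<^sub>R axis i 1)) has_real_derivative h' x) (at 0)" "P h'"
    using assms(1,2) by (elim partials_inD[where i = i]) blast
  with assms(3) show "\<exists>gh'. (\<forall>x\<in>S. ((\<lambda>t. g (x + t *\<^sub>R axis i 1) + h (x + t *\<^sub>R axis i 1))
      has_real_derivative gh' x) (at 0)) \<and> P gh'"
    by (intro exI[of _ "\<lambda>x. g' x + h' x"] conjI ballI DERIV_add) auto
qed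

lemma partials_in_mult:
  assumes "partials_in S P g" and "partials_in S P h" and "P g" and "P h"
    and add: "\<And>g' h'. P g' \<Longrightarrow> P h' \<Longrightarrow> P (\<lambda>x. g' x + h' x)"
    and mult: "\<And>g' h'. P g' \<Longrightarrow> P h' \<Longrightarrow> P (\<lambda>x. g' x * h' x)"
  shows "partials_in S P (\<lambda>x. g x * h x)"
  unfolding partials_in_def
proof
  fix i
  obtain g' h' where g': "\<And>x. x \<in> S \<Longrightarrow> ((\<lambda>t. g (x + t *\<^sub>R axis i 1)) has_real_derivative g' x) (at 0)" "P g'"
    and h': "\<And>x. x \<in> S \<Longrightarrow> ((\<lambda>t. h (x + t *\<^sub>R axis i 1)) has_real_derivative h' x) (at 0)" "P h'"
    using assms(1,2) by (elim partials_inD[where i = i]) blast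
  have "((\<lambda>t. g (x + t *\<^sub>R axis i 1) * h (x + t *\<^sub>R axis i 1)) has_real_derivative g x * h' x + g' x * h x) (at 0)"
    if "x \<in> S" for x
    using DERIV_mult[OF g'(1)[OF that] h'(1)[OF that]] by (simp add: algebra_simps)
  moreover have "P (\<lambda>x. g x * h' x + g' x * h x)"
    by (intro add mult assms(3,4) g'(2) h'(2))
  ultimately show "\<exists>gh'. (\<forall>x\<in>S. ((\<lambda>t. g (x + t *\<^sub>R axis i 1) * h (x + t *\<^sub>R axis i 1))
      has_real_derivative gh' x) (at 0)) \<and> P gh'"
    by (intro exI[of _ "\<lambda>x. g x * h' x + g' x * h x"]) blast
qed

lemma partials_in_inverse:
  assumes "partials_in S P g" and "\<And>x. x \<in> S \<Longrightarrow> g x \<noteq> 0"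
    and "P (\<lambda>x. inverse (g x))" and "P (\<lambda>x. -1)"
    and mult: "\<And>g' h'. P g' \<Longrightarrow> P h' \<Longrightarrow> P (\<lambda>x. g' x * h' x)"
  shows "partials_in S P (\<lambda>x. inverse (g x))"
  unfolding partials_in_def
proof
  fix i
  obtain g' where g': "\<And>x. x \<in> S \<Longrightarrow> ((\<lambda>t. g (x + t *\<^sub>R axis i 1)) has_real_derivative g' x) (at 0)" "P g'"
    using assms(1) by (elim partials_inD[where i = i]) blast
  have "((\<lambda>t. inverse (g (x + t *\<^sub>R axis i 1))) has_real_derivative (-1) * g' x * inverse (g x) * inverse (g x)) (at 0)"
    if "x \<in> S" for x
    using DERIV_inverse_fun[OF g'(1)[OF that]] assms(2)[OF that] by (simp add: power2_eq_square mult.assoc)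
  moreover have "P (\<lambda>x. (-1) * g' x * inverse (g x) * inverse (g x))"
    by (intro mult assms(3,4) g'(2))
  ultimately show "\<exists>g''. (\<forall>x\<in>S. ((\<lambda>t. inverse (g (x + t *\<^sub>R axis i 1))) has_real_derivative g'' x) (at 0))
      \<and> P g''"
    by (intro exI[of _ "\<lambda>x. (-1) * g' x * inverse (g x) * inverse (g x)"]) blast
qed

lemma smooth_on_const: "smooth_on S (\<lambda>x. c)"
proof (coinduction arbitrary: c rule: smooth_on.coinduct)
  case smooth_on
  then show ?case by (auto intro!: exI[of _ "\<lambda>x. 0"])
qed

lemma smooth_on_component: "smooth_on S (\<lambda>x. x $ j)"
proof (rule smooth_onI)
  show "continuous_on S (\<lambda>x. x $ j)"
    by (intro continuous_intros)
  show "partials_in S (smooth_on S) (\<lambda>x. x $ j)"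
    unfolding partials_in_def
  proof
    fix i
    show "\<exists>g'. (\<forall>x\<in>S. ((\<lambda>t. (x + t *\<^sub>R axis i 1) $ j) has_real_derivative g' x) (at 0)) \<and> smooth_on S g'"
      by (intro exI[of _ "\<lambda>x. axis i 1 $ j"] conjI ballI smooth_on_const)
         (auto intro!: derivative_eq_intros)
  qed
qed

lemma smooth_on_cong:
  assumes "open S" and g: "smooth_on S g" and eq: "\<And>x. x \<in> S \<Longrightarrow> g x = h x"
  shows "smooth_on S h"
proof (rule smooth_onI)
  show "continuous_on S h"
    using smooth_on_continuous_on[OF g] eq continuous_on_cong by blast
  show "partials_in S (smooth_on S) h"
    unfolding partials_in_def
  proof
    fix i
    obtain g' where g': "\<And>x. x \<in> S \<Longrightarrow> ((\<lambda>t. g (x + t *\<^sub>R axis i 1)) has_real_derivative g' x) (at 0)"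
      and "smooth_on S g'"
      using smooth_on_partials_in[OF g] by (elim partials_inD[where i = i]) blast
    have "((\<lambda>t. h (x + t *\<^sub>R axis i 1)) has_real_derivative g' x) (at 0)" if "x \<in> S" for x
    proof (rule has_field_derivative_transform_within_open[OF g'[OF that]])
      show "open ((\<lambda>t. x + t *\<^sub>R axis i 1) -` S)"
        by (intro continuous_open_vimage \<open>open S\<close> continuous_intros)
    qed (use that eq in auto)
    with \<open>smooth_on S g'\<close>
    show "\<exists>g'. (\<forall>x\<in>S. ((\<lambda>t. h (x + t *\<^sub>R axis i 1)) has_real_derivative g' x) (at 0)) \<and> smooth_on S g'"
      by blast
  qed
qed

text \<open>The derivative of \<open>f \<circ> Y\<close> involves \<open>(\<partial>f) \<circ> Y\<close>, so smoothness of compositions is proved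
  by coinduction over the algebra generated by smooth functions and pullbacks along \<open>Y\<close>.\<close>

inductive pullback_algebra :: "(real^'n) set \<Rightarrow> (real^'m) set \<Rightarrow> (real^'n \<Rightarrow> real^'m) \<Rightarrow> (real^'n \<Rightarrow> real) \<Rightarrow> bool"
  for S T Y where
  smooth: "smooth_on S g \<Longrightarrow> pullback_algebra S T Y g"
| pullback: "smooth_on T f \<Longrightarrow> pullback_algebra S T Y (\<lambda>x. f (Y x))"
| add: "pullback_algebra S T Y g \<Longrightarrow> pullback_algebra S T Y h \<Longrightarrow> pullback_algebra S T Y (\<lambda>x. g x + h x)"
| mult: "pullback_algebra S T Y g \<Longrightarrow> pullback_algebra S T Y h \<Longrightarrow> pullback_algebra S T Y (\<lambda>x. g x * h x)"
| inverse: "pullback_algebra S T Y g \<Longrightarrow> (\<forall>x\<in>S. g x \<noteq> 0) \<Longrightarrow> pullback_algebra S T Y (\<lambda>x. inverse (g x))"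

lemma pullback_algebra_sum:
  assumes "finite I" "\<And>i. i \<in> I \<Longrightarrow> pullback_algebra S T Y (G i)"
  shows "pullback_algebra S T Y (\<lambda>x. \<Sum>i\<in>I. G i x)"
  using assms
proof (induction I rule: finite_induct)
  case empty
  show ?case
    using pullback_algebra.smooth[OF smooth_on_const[of S 0]] by simp
next
  case (insert a I)
  then show ?case
    using pullback_algebra.add[of S T Y "G a" "\<lambda>x. \<Sum>i\<in>I. G i x"] by simp
qed

lemma partials_in_pullback:
  fixes Y :: "real^'n \<Rightarrow> real^'m"
  assumes "open T" and YT: "\<And>x. x \<in> S \<Longrightarrow> Y x \<in> T"
    and Y: "\<And>j. smooth_on S (\<lambda>x. Y x $ j)" and f: "smooth_on T f"
  shows "partials_in S (pullback_algebra S T Y) (\<lambda>x. f (Y x))"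
  unfolding partials_in_def
proof
  fix i
  have D_ex: "\<forall>j. \<exists>g'. (\<forall>z\<in>T. ((\<lambda>t. f (z + t *\<^sub>R axis j 1)) has_real_derivative g' z) (at 0)) \<and> smooth_on T g'"
    using smooth_on_partials_in[OF f] unfolding partials_in_def .
  obtain D where D: "\<And>j z. z \<in> T \<Longrightarrow> ((\<lambda>t. f (z + t *\<^sub>R axis j 1)) has_real_derivative D j z) (at 0)"
    and D_smooth: "\<And>j. smooth_on T (D j)"
    using choice[OF D_ex] by blast
  have DY_ex: "\<forall>j. \<exists>g'. (\<forall>x\<in>S. ((\<lambda>t. Y (x + t *\<^sub>R axis i 1) $ j) has_real_derivative g' x) (at 0)) \<and> smooth_on S g'"
  proof
    fix j
    show "\<exists>g'. (\<forall>x\<in>S. ((\<lambda>t. Y (x + t *\<^sub>R axis i 1) $ j) has_real_derivative g' x) (at 0)) \<and> smooth_on S g'"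
      using smooth_on_partials_in[OF Y[of j]] unfolding partials_in_def by (rule spec)
  qed
  obtain DY where DY: "\<And>j x. x \<in> S \<Longrightarrow> ((\<lambda>t. Y (x + t *\<^sub>R axis i 1) $ j) has_real_derivative DY j x) (at 0)"
    and DY_smooth: "\<And>j. smooth_on S (DY j)"
    using choice[OF DY_ex] by blast
  have chain: "((\<lambda>t. f (Y (x + t *\<^sub>R axis i 1))) has_real_derivative (\<Sum>j\<in>UNIV. DY j x * D j (Y x))) (at 0)"
    if "x \<in> S" for x
  proof (rule DERIV_partial_chain[OF _ DY[OF that]])
    show "(f has_derivative (\<lambda>v. \<Sum>j\<in>UNIV. v $ j * D j (Y x))) (at (Y x))"
      using D smooth_on_continuous_on[OF D_smooth]
      by (rule has_derivative_continuous_partials[OF \<open>open T\<close> YT[OF that]])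
  qed
  have algebra: "pullback_algebra S T Y (\<lambda>x. \<Sum>j\<in>UNIV. DY j x * D j (Y x))"
    by (intro pullback_algebra_sum finite pullback_algebra.mult pullback_algebra.smooth
        pullback_algebra.pullback DY_smooth D_smooth)
  show "\<exists>g'. (\<forall>x\<in>S. ((\<lambda>t. f (Y (x + t *\<^sub>R axis i 1))) has_real_derivative g' x) (at 0))
      \<and> pullback_algebra S T Y g'"
    using chain algebra by (intro exI[of _ "\<lambda>x. \<Sum>j\<in>UNIV. DY j x * D j (Y x)"]) auto
qed

lemma pullback_algebra_continuous_partials:
  fixes Y :: "real^'n \<Rightarrow> real^'m"
  assumes T: "open T" and YT: "\<And>x. x \<in> S \<Longrightarrow> Y x \<in> T"
    and Y: "\<And>j. smooth_on S (\<lambda>x. Y x $ j)"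
    and "pullback_algebra S T Y g"
  shows "continuous_on S g \<and> partials_in S (pullback_algebra S T Y) g"
  using \<open>pullback_algebra S T Y g\<close>
proof (induction rule: pullback_algebra.induct)
  case (smooth g)
  then show ?case
    using smooth_onD pullback_algebra.smooth by (blast intro: partials_in_mono)
next
  case (pullback f)
  have "continuous_on S (\<lambda>x. \<chi> j. Y x $ j)"
    using smooth_on_continuous_on[OF Y] by (intro continuous_on_vec_lambda)
  then have "continuous_on S (\<lambda>x. f (Y x))"
    using smooth_on_continuous_on[OF pullback] YT by (auto intro: continuous_on_compose2)
  with partials_in_pullback[OF T YT Y pullback] show ?case
    by blast
next
  case (add g h)
  then show ?case
    by (auto intro!: continuous_intros partials_in_add pullback_algebra.add)
next
  case (mult g h)
  then show ?case
    by (auto intro!: continuous_intros partials_in_mult pullback_algebra.add pullback_algebra.mult)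
next
  case (inverse g)
  then show ?case
    by (auto intro!: continuous_intros partials_in_inverse pullback_algebra.mult
        pullback_algebra.inverse pullback_algebra.smooth[OF smooth_on_const])
qed

lemma smooth_on_pullback_algebra:
  fixes Y :: "real^'n \<Rightarrow> real^'m"
  assumes "open T" and "\<And>x. x \<in> S \<Longrightarrow> Y x \<in> T"
    and "\<And>j. smooth_on S (\<lambda>x. Y x $ j)"
    and "pullback_algebra S T Y g"
  shows "smooth_on S g"
proof -
  define X where "X S' g \<longleftrightarrow> S' = S \<and> pullback_algebra S T Y g" for S' g
  have "X S g"
    using assms(4) by (simp add: X_def)
  then show ?thesis
  proof (rule smooth_on.coinduct)
    fix S' g
    assume "X S' g"
    then have "S' = S" and g: "pullback_algebra S T Y g"
      by (simp_all add: X_def)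
    have "continuous_on S g" and "partials_in S (pullback_algebra S T Y) g"
      using pullback_algebra_continuous_partials[OF assms(1-3) g] by simp_all
    moreover from this(2) have "partials_in S (\<lambda>g'. X S g' \<or> smooth_on S g') g"
      by (rule partials_in_mono) (simp add: X_def)
    ultimately show "\<exists>S'' g''. S' = S'' \<and> g = g'' \<and> continuous_on S'' g'' \<and>
        (\<forall>i. \<exists>g'. (\<forall>x\<in>S''. ((\<lambda>t. g'' (x + t *\<^sub>R axis i 1)) has_real_derivative g' x) (at 0))
          \<and> (X S'' g' \<or> smooth_on S'' g'))"
      using \<open>S' = S\<close> unfolding partials_in_def by (intro exI[of _ S] exI[of _ g] conjI) simp_all
  qed
qed

lemma smooth_on_compose:
  fixes Y :: "real^'n \<Rightarrow> real^'m"
  assumes "open T" and "\<And>x. x \<in> S \<Longrightarrow> Y x \<in> T"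
    and "\<And>j. smooth_on S (\<lambda>x. Y x $ j)" and "smooth_on T f"
  shows "smooth_on S (\<lambda>x. f (Y x))"
  by (rule smooth_on_pullback_algebra[OF assms(1-3) pullback_algebra.pullback[OF assms(4)]])

lemma smooth_on_pullback_algebra_id:
  "pullback_algebra S (UNIV :: (real^'n) set) (\<lambda>x :: real^'n. x) g \<Longrightarrow> smooth_on S g"
  by (rule smooth_on_pullback_algebra[OF open_UNIV UNIV_I smooth_on_component])

lemma smooth_on_mult: "smooth_on S g \<Longrightarrow> smooth_on S h \<Longrightarrow> smooth_on S (\<lambda>x. g x * h x)"
  by (rule smooth_on_pullback_algebra_id, rule pullback_algebra.mult; rule pullback_algebra.smooth)

lemma smooth_on_inverse: "smooth_on S g \<Longrightarrow> (\<And>x. x \<in> S \<Longrightarrow> g x \<noteq> 0) \<Longrightarrow> smooth_on S (\<lambda>x. inverse (g x))"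
  by (rule smooth_on_pullback_algebra_id, rule pullback_algebra.inverse, rule pullback_algebra.smooth) auto

lemma smooth_on_divide:
  "smooth_on S g \<Longrightarrow> smooth_on S h \<Longrightarrow> (\<And>x. x \<in> S \<Longrightarrow> h x \<noteq> 0) \<Longrightarrow> smooth_on S (\<lambda>x. g x / h x)"
  unfolding divide_inverse by (intro smooth_on_mult smooth_on_inverse)

lemma smooth_map_on_compose:
  fixes Y :: "real^'n \<Rightarrow> real^'m"
  assumes "open T" and "Y ` S \<subseteq> T" and "smooth_map_on S Y" and "smooth_map_on T Z"
  shows "smooth_map_on S (Z \<circ> Y)"
  unfolding smooth_map_on_def o_def
proof
  fix j
  show "smooth_on S (\<lambda>x. Z (Y x) $ j)"
    by (rule smooth_on_compose[OF \<open>open T\<close>])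
       (use assms in \<open>auto simp: smooth_map_on_def\<close>)
qed

lemma smooth_map_on_cong:
  assumes "open S" and "smooth_map_on S Y" and "\<And>x. x \<in> S \<Longrightarrow> Y x = Z x"
  shows "smooth_map_on S Z"
  unfolding smooth_map_on_def
proof
  fix j
  show "smooth_on S (\<lambda>x. Z x $ j)"
    by (rule smooth_on_cong[OF \<open>open S\<close>, of "\<lambda>x. Y x $ j"])
       (use assms in \<open>auto simp: smooth_map_on_def\<close>)
qed

lemma smooth_map_on_scale:
  "smooth_on S r \<Longrightarrow> smooth_map_on S (\<lambda>x. r x *\<^sub>R x)"
  unfolding smooth_map_on_def by (simp add: smooth_on_mult smooth_on_component)

section \<open>Thermodynamic coordinate transformations\<close>

lemma open_punct: "open (punct :: (real^'n) set)"
  by (simp add: open_Diff)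

lemma is_norm_scaleR: "is_norm nrm \<Longrightarrow> nrm (c *\<^sub>R x) = \<bar>c\<bar> * nrm x"
  by (simp add: is_norm_def)

lemma is_norm_pos:
  assumes "is_norm nrm" and "x \<noteq> 0"
  shows "nrm x > 0"
proof -
  have "nrm (x + - x) \<le> nrm x + nrm (- x)" and "nrm 0 = 0" and "nrm x \<noteq> 0"
    using assms unfolding is_norm_def by blast+
  moreover have "nrm (- x) = nrm x"
    using is_norm_scaleR[OF assms(1), of "-1" x] by simp
  ultimately show ?thesis
    by simp
qed

lemma TCT_D:
  assumes "Y \<in> TCT"
  shows TCT_zero: "Y 0 = 0"
    and TCT_bij_betw: "bij_betw Y punct punct"
    and TCT_smooth: "smooth_map_on punct Y"
    and TCT_smooth_inverse: "smooth_map_on punct (inv_into punct Y)"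
    and TCT_homogeneous: "\<And>x lam. x \<noteq> 0 \<Longrightarrow> lam \<noteq> 0 \<Longrightarrow> Y (lam *\<^sub>R x) = lam *\<^sub>R Y x"
  using assms by (auto simp: TCT_def)

lemma TCT_inverse:
  assumes "Y \<in> TCT" and "x \<noteq> 0"
  shows TCT_nonzero: "Y x \<noteq> 0"
    and TCT_inv_into_nonzero: "inv_into punct Y x \<noteq> 0"
    and TCT_inv_into_f: "inv_into punct Y (Y x) = x"
    and TCT_f_inv_into: "Y (inv_into punct Y x) = x"
  using TCT_bij_betw[OF assms(1)] assms(2) inv_into_into[of x Y punct]
  by (auto simp: bij_betw_def f_inv_into_f inv_into_f_f)

lemma TCT_surj: "Y \<in> TCT \<Longrightarrow> surj Y"
  by (metis TCT_f_inv_into TCT_zero rangeI surj_def)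

lemma TCT_by_inverse:
  assumes "Y 0 = 0"
    and Y: "\<And>x. x \<noteq> 0 \<Longrightarrow> Y x \<noteq> 0" and Z: "\<And>y. y \<noteq> 0 \<Longrightarrow> Z y \<noteq> 0"
    and ZY: "\<And>x. x \<noteq> 0 \<Longrightarrow> Z (Y x) = x" and YZ: "\<And>y. y \<noteq> 0 \<Longrightarrow> Y (Z y) = y"
    and "smooth_map_on punct Y" and "smooth_map_on punct Z"
    and "\<And>x lam. x \<noteq> 0 \<Longrightarrow> lam \<noteq> 0 \<Longrightarrow> Y (lam *\<^sub>R x) = lam *\<^sub>R Y x"
  shows "Y \<in> TCT"
proof -
  have bij: "bij_betw Y punct punct"
    by (rule bij_betw_byWitness[where f' = Z]) (use Y Z ZY YZ in auto)
  have "inv_into punct Y y = Z y" if "y \<in> punct" for y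
    by (rule inv_into_f_eq[OF bij_betw_imp_inj_on[OF bij]]) (use that Z YZ in auto)
  then have "smooth_map_on punct (inv_into punct Y)"
    using smooth_map_on_cong[OF open_punct \<open>smooth_map_on punct Z\<close>] by metis
  with assms bij show ?thesis
    by (simp add: TCT_def)
qed

lemma TCT_compose:
  assumes "Y1 \<in> TCT" and "Y2 \<in> TCT"
  shows "Y1 \<circ> Y2 \<in> TCT"
proof (rule TCT_by_inverse[where Z = "inv_into punct Y2 \<circ> inv_into punct Y1"])
  show "smooth_map_on punct (Y1 \<circ> Y2)"
    by (rule smooth_map_on_compose[OF open_punct _ TCT_smooth[OF assms(2)] TCT_smooth[OF assms(1)]])
       (use TCT_nonzero[OF assms(2)] in auto)
  show "smooth_map_on punct (inv_into punct Y2 \<circ> inv_into punct Y1)"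
    by (rule smooth_map_on_compose[OF open_punct _ TCT_smooth_inverse[OF assms(1)] TCT_smooth_inverse[OF assms(2)]])
       (use TCT_inv_into_nonzero[OF assms(1)] in auto)
qed (use assms in \<open>auto simp: TCT_zero TCT_nonzero TCT_inv_into_nonzero TCT_inv_into_f TCT_f_inv_into
  TCT_homogeneous\<close>)

definition radial_factor :: "(real^'n \<Rightarrow> real) \<Rightarrow> bool" where
  "radial_factor r \<longleftrightarrow> smooth_on punct r \<and> (\<forall>x. x \<noteq> 0 \<longrightarrow> r x > 0)
     \<and> (\<forall>x lam. x \<noteq> 0 \<longrightarrow> lam \<noteq> 0 \<longrightarrow> r (lam *\<^sub>R x) = r x)"

lemma TCT_N_iff: "Y \<in> TCT_N \<longleftrightarrow> Y \<in> TCT \<and> (\<exists>r. radial_factor r \<and> (\<forall>x. x \<noteq> 0 \<longrightarrow> Y x = r x *\<^sub>R x))"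
  by (auto simp: TCT_N_def radial_factor_def)

lemma radial_factor_inverse: "radial_factor r \<Longrightarrow> radial_factor (\<lambda>x. inverse (r x))"
  unfolding radial_factor_def by (auto intro!: smooth_on_inverse dest: less_imp_neq)

lemma radial_factor_scaleR: "radial_factor r \<Longrightarrow> x \<noteq> 0 \<Longrightarrow> c \<noteq> 0 \<Longrightarrow> r (c *\<^sub>R x) = r x"
  by (simp add: radial_factor_def)

lemma radial_rescale_cancel:
  assumes "radial_factor r" and "x \<noteq> 0"
  shows "inverse (r (r x *\<^sub>R x)) *\<^sub>R (r x *\<^sub>R x) = x"
proof -
  have "r x > 0"
    using assms by (simp add: radial_factor_def)
  with radial_factor_scaleR[OF assms, of "r x"] show ?thesis
    by simp
qed

lemma radial_rescale_in_TCT_N: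
  assumes r: "radial_factor r"
  shows "(\<lambda>x. r x *\<^sub>R x) \<in> TCT_N"
proof -
  have pos: "\<And>x. x \<noteq> 0 \<Longrightarrow> r x > 0"
    using r by (simp add: radial_factor_def)
  note r' = radial_factor_inverse[OF r]
  have "(\<lambda>x. r x *\<^sub>R x) \<in> TCT"
  proof (rule TCT_by_inverse[where Z = "\<lambda>y. inverse (r y) *\<^sub>R y"])
    show "smooth_map_on punct (\<lambda>x. r x *\<^sub>R x)" "smooth_map_on punct (\<lambda>y. inverse (r y) *\<^sub>R y)"
      using r r' by (auto simp: radial_factor_def intro: smooth_map_on_scale)
    show "inverse (r (r x *\<^sub>R x)) *\<^sub>R (r x *\<^sub>R x) = x" if "x \<noteq> 0" for x
      by (rule radial_rescale_cancel[OF r that])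
    show "r (inverse (r y) *\<^sub>R y) *\<^sub>R (inverse (r y) *\<^sub>R y) = y" if "y \<noteq> 0" for y
      using radial_rescale_cancel[OF r' that] by simp
  qed (use r pos in \<open>auto simp: radial_factor_def dest: less_imp_neq[OF pos]\<close>)
  with r show ?thesis
    unfolding TCT_N_iff by blast
qed

definition norm_ratio :: "(real^'n \<Rightarrow> real) \<Rightarrow> (real^'n \<Rightarrow> real^'n) \<Rightarrow> real^'n \<Rightarrow> real" where
  "norm_ratio nrm Y x = nrm (Y x) / nrm x"

lemma radial_factor_norm_ratio:
  fixes Y :: "real^'n \<Rightarrow> real^'n"
  assumes nrm: "is_norm nrm" "smooth_on punct nrm" and Y: "Y \<in> TCT"
  shows "radial_factor (norm_ratio nrm Y)"
  unfolding radial_factor_def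
proof (intro conjI allI impI)
  have "smooth_on punct (\<lambda>x. nrm (Y x))"
    by (rule smooth_on_compose[OF open_punct _ _ nrm(2)])
       (use TCT_nonzero[OF Y] TCT_smooth[OF Y] in \<open>auto simp: smooth_map_on_def\<close>)
  then show "smooth_on punct (norm_ratio nrm Y)"
    unfolding norm_ratio_def
    by (intro smooth_on_divide nrm(2)) (use nrm(1) in \<open>auto simp: is_norm_def\<close>)
  fix x :: "real^'n"
  assume "x \<noteq> 0"
  then show "norm_ratio nrm Y x > 0"
    by (simp add: norm_ratio_def is_norm_pos[OF nrm(1)] TCT_nonzero[OF Y])
  fix lam :: real
  assume "lam \<noteq> 0"
  then show "norm_ratio nrm Y (lam *\<^sub>R x) = norm_ratio nrm Y x"
    by (simp add: norm_ratio_def TCT_homogeneous[OF Y \<open>x \<noteq> 0\<close>] is_norm_scaleR[OF nrm(1)])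
qed

lemma TCT_N_eq_norm_ratio:
  fixes h g :: "real^'n \<Rightarrow> real^'n"
  assumes nrm: "is_norm nrm" and h: "h \<in> TCT_H nrm" and g: "g \<in> TCT_N"
  shows "g = (\<lambda>x. norm_ratio nrm (h \<circ> g) x *\<^sub>R x)"
proof
  fix x :: "real^'n"
  show "g x = norm_ratio nrm (h \<circ> g) x *\<^sub>R x"
  proof (cases "x = 0")
    case True
    with g show ?thesis
      by (simp add: TCT_N_def TCT_zero)
  next
    case False
    obtain r where r: "radial_factor r" and gr: "g x = r x *\<^sub>R x"
      using g False unfolding TCT_N_iff by blast
    have "r x > 0"
      using r False by (simp add: radial_factor_def)
    have "nrm (h (g x)) = nrm (g x)"
      using h TCT_nonzero[of g x] g False by (simp add: TCT_H_def TCT_N_def)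
    then have "norm_ratio nrm (h \<circ> g) x = r x"
      using \<open>r x > 0\<close> is_norm_pos[OF nrm False]
      by (simp add: norm_ratio_def gr is_norm_scaleR[OF nrm])
    then show ?thesis
      by (simp add: gr)
  qed
qed

lemma TCT_H_compose_inverse_norm_ratio:
  assumes nrm: "is_norm nrm" "smooth_on punct nrm" and Y: "Y \<in> TCT"
  shows "Y \<circ> (\<lambda>x. inverse (norm_ratio nrm Y x) *\<^sub>R x) \<in> TCT_H nrm"
proof -
  let ?\<rho> = "norm_ratio nrm Y"
  have \<rho>: "radial_factor ?\<rho>"
    by (rule radial_factor_norm_ratio[OF nrm Y])
  have "(\<lambda>x. inverse (?\<rho> x) *\<^sub>R x) \<in> TCT"
    using radial_rescale_in_TCT_N[OF radial_factor_inverse[OF \<rho>]] by (simp add: TCT_N_def)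
  moreover have "nrm (Y (inverse (?\<rho> x) *\<^sub>R x)) = nrm x" if "x \<noteq> 0" for x
    using that is_norm_pos[OF nrm(1) that] is_norm_pos[OF nrm(1) TCT_nonzero[OF Y that]]
    by (simp add: TCT_homogeneous[OF Y] is_norm_scaleR[OF nrm(1)] norm_ratio_def)
  moreover have "Y (inverse (?\<rho> (- x)) *\<^sub>R - x) = - Y (inverse (?\<rho> x) *\<^sub>R x)" if "x \<noteq> 0" for x
  proof -
    have "?\<rho> ((-1) *\<^sub>R x) = ?\<rho> x" and "?\<rho> x \<noteq> 0"
      using radial_factor_scaleR[OF \<rho> that, of "-1"] \<rho> that by (auto simp: radial_factor_def)
    moreover have "Y ((-1) *\<^sub>R x) = (-1) *\<^sub>R Y x"
      using TCT_homogeneous[OF Y that, of "-1"] by simp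
    ultimately show ?thesis
      using that TCT_homogeneous[OF Y that, of "- inverse (?\<rho> x)"] by (simp add: TCT_homogeneous[OF Y])
  qed
  ultimately show ?thesis
    using TCT_compose[OF Y] by (simp add: TCT_H_def)
qed

lemma TCT_H_TCT_N_decomposition_unique:
  assumes "is_norm nrm" and "h1 \<in> TCT_H nrm" "g1 \<in> TCT_N" and "h2 \<in> TCT_H nrm" "g2 \<in> TCT_N"
    and eq: "h1 \<circ> g1 = h2 \<circ> g2"
  shows "h1 = h2 \<and> g1 = g2"
proof
  show "g1 = g2"
    using TCT_N_eq_norm_ratio[OF assms(1,2,3)] TCT_N_eq_norm_ratio[OF assms(1,4,5)] eq by simp
  moreover have "surj g1"
    using assms(3) by (simp add: TCT_N_def TCT_surj)
  ultimately show "h1 = h2"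
    using eq by (metis surj_fun_eq)
qed

lemma radial_rescale_factorisation:
  assumes "Y 0 = 0" and "radial_factor r"
  shows "Y = (Y \<circ> (\<lambda>x. inverse (r x) *\<^sub>R x)) \<circ> (\<lambda>x. r x *\<^sub>R x)"
proof
  fix x
  show "Y x = ((Y \<circ> (\<lambda>x. inverse (r x) *\<^sub>R x)) \<circ> (\<lambda>x. r x *\<^sub>R x)) x"
    using radial_rescale_cancel[OF assms(2), of x] assms(1) by (cases "x = 0") simp_all
qed

theorem proposition2:
  fixes nrm :: "real ^ 'n \<Rightarrow> real" and Y :: "real ^ 'n \<Rightarrow> real ^ 'n"
  assumes "is_norm nrm"
    and "smooth_on punct nrm"
    and "Y \<in> TCT"
  shows "\<exists>!(h, gN). h \<in> TCT_H nrm \<and> gN \<in> TCT_N \<and> Y = h \<circ> gN"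
proof -
  let ?\<rho> = "norm_ratio nrm Y"
  let ?gN = "\<lambda>x. ?\<rho> x *\<^sub>R x" and ?h = "Y \<circ> (\<lambda>x. inverse (?\<rho> x) *\<^sub>R x)"
  have \<rho>: "radial_factor ?\<rho>"
    by (rule radial_factor_norm_ratio[OF assms])
  have "?h \<in> TCT_H nrm" and "?gN \<in> TCT_N" and "Y = ?h \<circ> ?gN"
    using TCT_H_compose_inverse_norm_ratio[OF assms] radial_rescale_in_TCT_N[OF \<rho>]
      radial_rescale_factorisation[of Y, OF TCT_zero[OF assms(3)] \<rho>] by simp_all
  then show ?thesis
    using TCT_H_TCT_N_decomposition_unique[OF assms(1)] by (intro ex1I[of _ "(?h, ?gN)"]) auto
qed

end
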